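(* For all $p\in[1,\infty)$, $$\sup_{z\in\{-1,1\}}\ \sup_{N\in\mathbb{N}}\ \mathbb{E}\Big[\sup_{n\in\{0,1,\dots,N\}}\exp\Big(pz\sum_{k=0}^{n-1}\alpha^N_k\Big)\Big]<\infty.$$
   Context: Standing setting: $T\in(0,\infty)$; $(\Omega,\mathcal{F},\mathbb{P})$ with normal filtration $(\mathcal{F}_t)_{t\in[0,T]}$; $d,m\in\mathbb{N}$; $W$ an $m$-dimensional standard $(\mathcal{F}_t)$-Brownian motion; $\xi$ $\mathcal{F}_0$-measurable in $\mathbb{R}^d$ with all moments finite. $\|\cdot\|$ Euclidean/operator norm. $\mu\colon\mathbb{R}^d\to\mathbb{R}^d$ is $C^1$, $\sigma\colon\mathbb{R}^d\to\mathbb{R}^{d\times m}$, and there is $c\in(0,\infty)$ with $\|\mu'(x)\|\le c(1+\|x\|^c)$, $\|\sigma(x)-\sigma(y)\|\le c\|x-y\|$, $\langle x-y,\mu(x)-\mu(y)\rangle\le c\|x-y\|^2$. $\Delta W^N_n:=W_{(n+1)T/N}-W_{nT/N}$; tamed Euler scheme $Y^N_0=\xi$, $Y^N_{n+1}=Y^N_n+\frac{(T/N)\mu(Y^N_n)}{1+(T/N)\|\mu(Y^N_n)\|}+\sigma(Y^N_n)\Delta W^N_n$. $\alpha^N_n:=\mathbf{1}_{\{\|Y^N_n\|\ge1\}}\big\langle\frac{Y^N_n}{\|Y^N_n\|},\frac{\sigma(Y^N_n)}{\|Y^N_n\|}\Delta W^N_n\big\rangle$ (equal to $0$ when $\|Y^N_n\|<1$)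 for $n\in\{0,\dots,N-1\}$; empty sums are $0$. *)

theory Defs
  imports "HOL-Probability.Probability"
begin

definition normal_filtration ::
  "'a measure \<Rightarrow> real \<Rightarrow> (real \<Rightarrow> 'a measure) \<Rightarrow> bool" where
  "normal_filtration M T F \<longleftrightarrow>
     (\<forall>t\<in>{0..T}. space (F t) = space M \<and> sets (F t) \<subseteq> sets M) \<and>
     (\<forall>s t. 0 \<le> s \<longrightarrow> s \<le> t \<longrightarrow> t \<le> T \<longrightarrow> sets (F s) \<subseteq> sets (F t)) \<and>
     (\<forall>A B. B \<in> null_sets M \<longrightarrow> A \<subseteq> B \<longrightarrow> A \<in> sets (F 0)) \<and>
     (\<forall>t\<in>{0..<T}. sets (F t) = (\<Inter>s\<in>{t<..T}. sets (F s)))"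

definition std_brownian_motion ::
  "'a measure \<Rightarrow> real \<Rightarrow> (real \<Rightarrow> 'a measure) \<Rightarrow> (real \<Rightarrow> 'a \<Rightarrow> real^'m::finite) \<Rightarrow> bool" where
  "std_brownian_motion M T F W \<longleftrightarrow>
     (AE \<omega> in M. W 0 \<omega> = 0) \<and>
     (AE \<omega> in M. continuous_on {0..T} (\<lambda>t. W t \<omega>)) \<and>
     (\<forall>t\<in>{0..T}. W t \<in> borel_measurable (F t)) \<and>
     (\<forall>s t. 0 \<le> s \<longrightarrow> s < t \<longrightarrow> t \<le> T \<longrightarrow>
        distributed M lborel (\<lambda>\<omega>. W t \<omega> - W s \<omega>)
          (\<lambda>x. ennreal (\<Prod>i\<in>UNIV. normal_density 0 (sqrt (t - s)) (x $ i))) \<and>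
        (\<forall>A\<in>sets (F s). \<forall>B\<in>sets borel.
           measure M (A \<inter> ((\<lambda>\<omega>. W t \<omega> - W s \<omega>) -` B \<inter> space M)) =
           measure M A * measure M ((\<lambda>\<omega>. W t \<omega> - W s \<omega>) -` B \<inter> space M)))"

definition dW :: "real \<Rightarrow> nat \<Rightarrow> (real \<Rightarrow> 'a \<Rightarrow> real^'m) \<Rightarrow> nat \<Rightarrow> 'a \<Rightarrow> real^'m" where
  "dW T N W n \<omega> = W (real (Suc n) * T / real N) \<omega> - W (real n * T / real N) \<omega>"

text \<open>Tamed Euler scheme Y^N_n (matrices d\<times>m are real^'m^'d).\<close>
fun tamed_euler ::
  "real \<Rightarrow> nat \<Rightarrow> (real^'d \<Rightarrow> real^'d) \<Rightarrow> (real^'d \<Rightarrow> real^'m^'d)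
   \<Rightarrow> (real \<Rightarrow> 'a \<Rightarrow> real^'m) \<Rightarrow> ('a \<Rightarrow> real^'d) \<Rightarrow> nat \<Rightarrow> 'a \<Rightarrow> real^'d" where
  "tamed_euler T N \<mu> \<sigma> W \<xi> 0 \<omega> = \<xi> \<omega>"
| "tamed_euler T N \<mu> \<sigma> W \<xi> (Suc n) \<omega> =
     (let y = tamed_euler T N \<mu> \<sigma> W \<xi> n \<omega> in
      y + ((T / real N) / (1 + (T / real N) * norm (\<mu> y))) *\<^sub>R \<mu> y
        + \<sigma> y *v dW T N W n \<omega>)"

definition alpha ::
  "real \<Rightarrow> nat \<Rightarrow> (real^'d \<Rightarrow> real^'d) \<Rightarrow> (real^'d \<Rightarrow> real^'m^'d)
   \<Rightarrow> (real \<Rightarrow> 'a \<Rightarrow> real^'m) \<Rightarrow> ('a \<Rightarrow> real^'d) \<Rightarrow> nat \<Rightarrow> 'a \<Rightarrow> real" where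
  "alpha T N \<mu> \<sigma> W \<xi> n \<omega> =
     (let y = tamed_euler T N \<mu> \<sigma> W \<xi> n \<omega> in
      if norm y \<ge> 1
      then inner (y /\<^sub>R norm y) (((1 / norm y) *\<^sub>R \<sigma> y) *v dW T N W n \<omega>)
      else 0)"

end

theory Submission
  imports Defs
begin

(* Write h = T/N and t_k = kh.  Each increment is alpha_k = <v_k, Delta W_k>, where
   v_k = 1_{|Y_k| >= 1} Y_k^T sigma(Y_k) / |Y_k|^2 is F_{t_k}-measurable and bounded by
   K = ||sigma(0)|| + c (sigma grows at most linearly).  As Delta W_k ~ N(0, h I) is independent
   of F_{t_k}, the Gaussian moment generating function gives
   E[G exp <w, Delta W_k>] = E[G exp(|w|^2 h/2)] for F_{t_k}-measurable G >= 0 and w.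
   Two consequences for every real a:  E exp(a S_n) <= exp(a^2 K^2 T/2), and exp(a S_n) is a
   submartingale along the grid.  Doob's L^2 maximal inequality for the nonnegative
   submartingale exp(a S_n / 2) then yields  E max_{n<=N} exp(a S_n) <= 4 exp(a^2 K^2 T/2),
   uniformly in N; taking a = p z proves the theorem. *)


section \<open>Moment generating function of centred Gaussian vectors\<close>

text \<open>One-dimensional Gaussian moment generating function, by completing the square.\<close>
lemma normal_density_mgf:
  fixes a s :: real assumes s: "0 < s"
  shows "(\<integral>\<^sup>+t. ennreal (exp (a * t) * normal_density 0 s t) \<partial>lborel) = ennreal (exp (a\<^sup>2 * s\<^sup>2 / 2))"
proof -
  have shift: "exp (a * t) * normal_density 0 s t = exp (a\<^sup>2 * s\<^sup>2 / 2) * normal_density (a * s\<^sup>2) s t" for t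
  proof -
    have "a * t + (-(t^2) / (2 * s^2)) = a^2 * s^2 / 2 + (-((t - a * s^2)^2) / (2 * s^2))"
      using s by (simp add: field_simps power2_eq_square)
    then have "exp (a * t) * exp (-(t^2) / (2 * s^2)) = exp (a^2 * s^2 / 2) * exp (-((t - a * s^2)^2) / (2 * s^2))"
      by (metis exp_add)
    then show ?thesis unfolding normal_density_def by (simp add: mult_ac)
  qed
  have "(\<integral>\<^sup>+t. ennreal (exp (a * t) * normal_density 0 s t) \<partial>lborel)
     = (\<integral>\<^sup>+t. ennreal (exp (a\<^sup>2 * s\<^sup>2 / 2)) * ennreal (normal_density (a * s\<^sup>2) s t) \<partial>lborel)"
    by (simp add: shift ennreal_mult)
  also have "\<dots> = ennreal (exp (a\<^sup>2 * s\<^sup>2 / 2)) * (\<integral>\<^sup>+t. ennreal (normal_density (a * s\<^sup>2) s t) \<partial>lborel)"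
    by (rule nn_integral_cmult) simp
  also have "(\<integral>\<^sup>+t. ennreal (normal_density (a * s\<^sup>2) s t) \<partial>lborel) = 1"
    using s by (subst nn_integral_eq_integral) auto
  finally show ?thesis by simp
qed

text \<open>The same for a vector with independent \<open>N(0, s\<^sup>2)\<close> coordinates in a Euclidean space:
  the density factorises over the basis, so the integral is a product of one-dimensional ones.\<close>
lemma normal_vector_mgf:
  fixes w :: "'a::euclidean_space" and s :: real assumes s: "0 < s"
  shows "(\<integral>\<^sup>+x. ennreal (exp (inner w x) * (\<Prod>b\<in>Basis. normal_density 0 s (x \<bullet> b))) \<partial>lborel)
     = ennreal (exp ((norm w)\<^sup>2 * s\<^sup>2 / 2))"
proof -
  let ?g = "\<lambda>b t. ennreal (exp ((w \<bullet> b) * t) * normal_density 0 s t)"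
  have "(\<integral>\<^sup>+x. ennreal (exp (inner w x) * (\<Prod>b\<in>Basis. normal_density 0 s (x \<bullet> b))) \<partial>lborel)
     = (\<integral>\<^sup>+x. (\<Prod>b\<in>Basis. ?g b (x \<bullet> b)) \<partial>lborel)"
  proof (rule nn_integral_cong)
    fix x :: 'a
    have "exp (inner w x) = (\<Prod>b\<in>Basis. exp ((w \<bullet> b) * (x \<bullet> b)))"
      by (subst euclidean_inner) (simp add: exp_sum)
    then show "ennreal (exp (inner w x) * (\<Prod>b\<in>Basis. normal_density 0 s (x \<bullet> b))) = (\<Prod>b\<in>Basis. ?g b (x \<bullet> b))"
      by (simp add: prod.distrib[symmetric] prod_ennreal)
  qed
  also have "\<dots> = (\<Prod>b\<in>Basis. (\<integral>\<^sup>+t. ?g b t \<partial>lborel))"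
    by (rule nn_integral_lborel_prod) auto
  also have "\<dots> = ennreal (exp ((\<Sum>b\<in>Basis. (w \<bullet> b)\<^sup>2) * s\<^sup>2 / 2))"
    using normal_density_mgf[OF s]
    by (simp add: prod_ennreal exp_sum sum_divide_distrib sum_distrib_right)
  also have "(\<Sum>b\<in>Basis. (w \<bullet> b)\<^sup>2) = (norm w)\<^sup>2"
    using power2_norm_eq_inner[of w] euclidean_inner[of w w] by (simp add: power2_eq_square)
  finally show ?thesis .
qed

text \<open>A product over the coordinates of a Cartesian vector is a product over the standard basis;
  this translates the Brownian increment densities of the definitions into the form above.\<close>
lemma prod_components_eq_prod_Basis:
  fixes x :: "real^'m" and f :: "real \<Rightarrow> real"
  shows "(\<Prod>i\<in>UNIV. f (x $ i)) = (\<Prod>b\<in>Basis. f (x \<bullet> b))"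
proof -
  have "(\<Prod>b\<in>Basis. f (x \<bullet> b)) = (\<Prod>b\<in>(\<lambda>i. axis i (1::real)) ` UNIV. f (x \<bullet> b))"
    unfolding Basis_vec_def by (auto intro!: prod.cong)
  also have "\<dots> = (\<Prod>i\<in>UNIV. f (x \<bullet> axis i 1))"
    by (subst prod.reindex) (auto simp: inj_on_def axis_eq_axis)
  finally show ?thesis by (simp add: inner_axis)
qed

lemma normal_vec_mgf:
  fixes w :: "real^'m" and s :: real assumes s: "0 < s"
  shows "(\<integral>\<^sup>+x. ennreal (\<Prod>i\<in>UNIV. normal_density 0 s (x$i)) * ennreal (exp (inner w x)) \<partial>lborel)
     = ennreal (exp ((norm w)\<^sup>2 * s\<^sup>2 / 2))"
  unfolding prod_components_eq_prod_Basis[of "normal_density 0 s"]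
  using normal_vector_mgf[OF s, of w]
  by (simp add: ennreal_mult'[symmetric] mult.commute)


section \<open>Integrating against a Gaussian vector independent of a sub-\<open>\<sigma>\<close>-algebra\<close>

text \<open>If \<open>D\<close> is independent of the sub-\<open>\<sigma>\<close>-algebra \<open>Fs\<close>, then \<open>\<omega> \<mapsto> (\<omega>, D \<omega>)\<close> maps \<open>M\<close>
  onto the product of \<open>M\<close> restricted to \<open>Fs\<close> with the law of \<open>D\<close>: both measures agree on
  rectangles, which generate the product \<open>\<sigma>\<close>-algebra.\<close>
lemma distr_pair_indep:
  fixes M Fs :: "'a measure" and D :: "'a \<Rightarrow> 'b::euclidean_space"
  assumes P: "prob_space M" and subalg: "subalgebra M Fs" and D: "D \<in> borel_measurable M"
    and indep: "\<forall>A\<in>sets Fs. \<forall>B\<in>sets borel.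
                  measure M (A \<inter> (D -` B \<inter> space M)) = measure M A * measure M (D -` B \<inter> space M)"
  defines "Ms \<equiv> restr_to_subalg M Fs" and "L \<equiv> distr M lborel D"
  shows "(\<lambda>\<omega>. (\<omega>, D \<omega>)) \<in> measurable M (Ms \<Otimes>\<^sub>M L)"
    and "distr M (Ms \<Otimes>\<^sub>M L) (\<lambda>\<omega>. (\<omega>, D \<omega>)) = Ms \<Otimes>\<^sub>M L"
proof -
  interpret P: prob_space M by fact
  interpret Ms: prob_space Ms unfolding Ms_def by (rule prob_space_restr_to_subalg[OF subalg P])
  interpret L: prob_space L unfolding L_def using D by (intro P.prob_space_distr) simp
  have setsMs: "sets Ms = sets Fs" unfolding Ms_def by (rule sets_restr_to_subalg[OF subalg])
  have spaceMs: "space Ms = space M" unfolding Ms_def by (rule space_restr_to_subalg)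
  have id_meas: "(\<lambda>\<omega>. \<omega>) \<in> measurable M Ms"
  proof (rule measurableI)
    fix A assume "A \<in> sets Ms"
    then have "A \<in> sets M" "A \<subseteq> space M"
      using subalg sets.sets_into_space[of A Ms] by (auto simp: setsMs spaceMs subalgebra_def)
    then show "(\<lambda>\<omega>. \<omega>) -` A \<inter> space M \<in> sets M" by (simp add: Int_absorb2)
  qed (simp add: spaceMs)
  have setsL: "sets L = sets borel" unfolding L_def by simp
  have "D \<in> measurable M L" using D by (simp add: measurable_cong_sets[OF refl setsL])
  then show pair_meas: "(\<lambda>\<omega>. (\<omega>, D \<omega>)) \<in> measurable M (Ms \<Otimes>\<^sub>M L)"
    by (rule measurable_Pair[OF id_meas])
  show "distr M (Ms \<Otimes>\<^sub>M L) (\<lambda>\<omega>. (\<omega>, D \<omega>)) = Ms \<Otimes>\<^sub>M L"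
  proof (rule pair_measure_eqI[symmetric])
    show "sigma_finite_measure Ms" "sigma_finite_measure L" by unfold_locales
  next
    fix A B assume A: "A \<in> sets Ms" and B: "B \<in> sets L"
    have AF: "A \<in> sets Fs" and AS: "A \<subseteq> space M" and Bb: "B \<in> sets borel"
      using A B subalg sets.sets_into_space by (auto simp: setsMs setsL subalgebra_def)
    have "emeasure (distr M (Ms \<Otimes>\<^sub>M L) (\<lambda>\<omega>. (\<omega>, D \<omega>))) (A \<times> B)
        = emeasure M ((\<lambda>\<omega>. (\<omega>, D \<omega>)) -` (A \<times> B) \<inter> space M)"
      using A B by (intro emeasure_distr[OF pair_meas]) auto
    also have "(\<lambda>\<omega>. (\<omega>, D \<omega>)) -` (A \<times> B) \<inter> space M = A \<inter> (D -` B \<inter> space M)"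
      using AS by auto
    also have "emeasure M (A \<inter> (D -` B \<inter> space M)) = ennreal (measure M A * measure M (D -` B \<inter> space M))"
      using indep AF Bb by (simp add: P.emeasure_eq_measure)
    also have "\<dots> = emeasure Ms A * emeasure L B"
      using emeasure_restr_to_subalg[OF subalg AF] Bb D
      by (simp add: Ms_def L_def emeasure_distr P.emeasure_eq_measure ennreal_mult)
    finally show "emeasure Ms A * emeasure L B = emeasure (distr M (Ms \<Otimes>\<^sub>M L) (\<lambda>\<omega>. (\<omega>, D \<omega>))) (A \<times> B)"
      by simp
  qed simp_all
qed

text \<open>Integrating \<open>exp \<langle>w, D\<rangle>\<close> against an \<open>Fs\<close>-measurable weight, for a centred Gaussian vector
  \<open>D\<close> independent of \<open>Fs\<close> and an \<open>Fs\<close>-measurable \<open>w\<close>: by Fubini on the product measure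
  of the preceding lemma, \<open>D\<close> may be integrated out with \<open>w\<close> frozen.\<close>
lemma nn_integral_exp_indep_normal:
  fixes M Fs :: "'a measure" and D :: "'a \<Rightarrow> real^'m" and s :: real
    and G :: "'a \<Rightarrow> ennreal" and w :: "'a \<Rightarrow> real^'m"
  assumes P: "prob_space M" and subalg: "subalgebra M Fs"
    and dist: "distributed M lborel D (\<lambda>x. ennreal (\<Prod>i\<in>UNIV. normal_density 0 s (x$i)))"
    and s: "0 < s"
    and indep: "\<forall>A\<in>sets Fs. \<forall>B\<in>sets borel.
                  measure M (A \<inter> (D -` B \<inter> space M)) = measure M A * measure M (D -` B \<inter> space M)"
    and G: "G \<in> borel_measurable Fs" and w: "w \<in> borel_measurable Fs"
  shows "(\<integral>\<^sup>+\<omega>. G \<omega> * ennreal (exp (inner (w \<omega>) (D \<omega>))) \<partial>M)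
       = (\<integral>\<^sup>+\<omega>. G \<omega> * ennreal (exp ((norm (w \<omega>))\<^sup>2 * s\<^sup>2 / 2)) \<partial>M)"
proof -
  interpret P: prob_space M by fact
  define Ms where "Ms = restr_to_subalg M Fs"
  define L where "L = distr M lborel D"
  have D: "D \<in> borel_measurable M" using dist by (simp add: distributed_def)
  note pair = distr_pair_indep[OF P subalg D indep, folded Ms_def L_def]
  interpret L: prob_space L unfolding L_def using D by (intro P.prob_space_distr) simp
  have setsL: "sets L = sets borel" unfolding L_def by simp
  let ?H = "\<lambda>p. G (fst p) * ennreal (exp (inner (w (fst p)) (snd p)))"
  have H_meas: "?H \<in> borel_measurable (Ms \<Otimes>\<^sub>M L)"
  proof -
    have "G \<in> borel_measurable Ms" "w \<in> borel_measurable Ms"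
      unfolding Ms_def using G w by (auto intro: measurable_in_subalg[OF subalg])
    moreover have "snd \<in> measurable (Ms \<Otimes>\<^sub>M L) borel"
      using measurable_snd by (simp add: measurable_cong_sets[OF refl setsL, symmetric])
    ultimately show ?thesis by measurable
  qed
  have inner_mgf: "(\<integral>\<^sup>+x. ?H (\<omega>, x) \<partial>L) = G \<omega> * ennreal (exp ((norm (w \<omega>))\<^sup>2 * s\<^sup>2 / 2))" for \<omega>
  proof -
    have "L = density lborel (\<lambda>x. ennreal (\<Prod>i\<in>UNIV. normal_density 0 s (x$i)))"
      using dist by (simp add: distributed_def L_def)
    moreover have "(\<lambda>x. ennreal (\<Prod>i\<in>UNIV. normal_density 0 s (x$i))) \<in> borel_measurable lborel"
      using dist by (simp add: distributed_def)
    moreover have exp_meas: "(\<lambda>x. ennreal (exp (inner (w \<omega>) x))) \<in> borel_measurable lborel"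
      by measurable
    ultimately have "(\<integral>\<^sup>+x. ennreal (exp (inner (w \<omega>) x)) \<partial>L) = ennreal (exp ((norm (w \<omega>))\<^sup>2 * s\<^sup>2 / 2))"
      by (simp add: nn_integral_density normal_vec_mgf[OF s])
    moreover have "(\<integral>\<^sup>+x. ?H (\<omega>, x) \<partial>L) = G \<omega> * (\<integral>\<^sup>+x. ennreal (exp (inner (w \<omega>) x)) \<partial>L)"
      using exp_meas by (simp add: nn_integral_cmult measurable_cong_sets[OF setsL refl])
    ultimately show ?thesis by simp
  qed
  have "(\<integral>\<^sup>+\<omega>. G \<omega> * ennreal (exp (inner (w \<omega>) (D \<omega>))) \<partial>M)
      = (\<integral>\<^sup>+p. ?H p \<partial>(distr M (Ms \<Otimes>\<^sub>M L) (\<lambda>\<omega>. (\<omega>, D \<omega>))))"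
    using nn_integral_distr[OF pair(1), of ?H] H_meas by simp
  also have "\<dots> = (\<integral>\<^sup>+\<omega>. (\<integral>\<^sup>+x. ?H (\<omega>, x) \<partial>L) \<partial>Ms)"
    unfolding pair(2) by (rule L.nn_integral_fst[OF H_meas, symmetric])
  also have "\<dots> = (\<integral>\<^sup>+\<omega>. G \<omega> * ennreal (exp ((norm (w \<omega>))\<^sup>2 * s\<^sup>2 / 2)) \<partial>M)"
  proof -
    have "(\<lambda>\<omega>. norm (w \<omega>)) \<in> borel_measurable Fs" using w by measurable
    then have "(\<lambda>\<omega>. ennreal (exp ((norm (w \<omega>))\<^sup>2 * s\<^sup>2 / 2))) \<in> borel_measurable Fs"
      by measurable
    then show ?thesis
      unfolding inner_mgf Ms_def using G by (intro nn_integral_subalgebra2[OF subalg]) measurable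
  qed
  finally show ?thesis .
qed


section \<open>Doob's \<open>L\<^sup>2\<close> maximal inequality from a pathwise inequality\<close>

definition running_max :: "(nat \<Rightarrow> 'a \<Rightarrow> real) \<Rightarrow> nat \<Rightarrow> 'a \<Rightarrow> real" where
  "running_max Y n \<omega> = Max ((\<lambda>j. Y j \<omega>) ` {0..n})"

lemma running_max_Suc: "running_max Y (Suc n) \<omega> = max (running_max Y n \<omega>) (Y (Suc n) \<omega>)"
proof -
  have "{0..Suc n} = insert (Suc n) {0..n}" by auto
  then show ?thesis by (simp add: running_max_def max.commute)
qed

lemma running_max_ge: "j \<le> n \<Longrightarrow> Y j \<omega> \<le> running_max Y n \<omega>"
  unfolding running_max_def by (intro Max_ge) auto

lemma running_max_nonneg: "(\<And>j. 0 \<le> Y j \<omega>) \<Longrightarrow> 0 \<le> running_max Y n \<omega>"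
  using running_max_ge[of 0 n Y \<omega>] by (meson order_trans zero_le)

lemma running_max_sq_le_sum:
  assumes "\<And>j. 0 \<le> Y j \<omega>"
  shows "(running_max Y n \<omega>)\<^sup>2 \<le> (\<Sum>j\<in>{0..n}. (Y j \<omega>)\<^sup>2)"
proof -
  have "running_max Y n \<omega> \<in> (\<lambda>j. Y j \<omega>) ` {0..n}" unfolding running_max_def by (intro Max_in) auto
  then obtain j where "j \<in> {0..n}" "Y j \<omega> = running_max Y n \<omega>" by auto
  then show ?thesis using member_le_sum[of j "{0..n}" "\<lambda>j. (Y j \<omega>)\<^sup>2"] by auto
qed

lemma running_max_sq_eq_Max_sq:
  assumes "\<And>j. 0 \<le> Y j \<omega>"
  shows "(running_max Y n \<omega>)\<^sup>2 = Max ((\<lambda>j. (Y j \<omega>)\<^sup>2) ` {0..n})"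
proof -
  have "running_max Y n \<omega> \<in> (\<lambda>j. Y j \<omega>) ` {0..n}" unfolding running_max_def by (intro Max_in) auto
  then obtain i where i: "i \<in> {0..n}" "Y i \<omega> = running_max Y n \<omega>" by auto
  show ?thesis
  proof (rule Max_eqI[symmetric])
    show "(running_max Y n \<omega>)\<^sup>2 \<in> (\<lambda>j. (Y j \<omega>)\<^sup>2) ` {0..n}" using i by force
  next
    fix x assume "x \<in> (\<lambda>j. (Y j \<omega>)\<^sup>2) ` {0..n}"
    then obtain j where "j \<le> n" "x = (Y j \<omega>)\<^sup>2" by auto
    then show "x \<le> (running_max Y n \<omega>)\<^sup>2"
      using running_max_ge[of j n Y \<omega>] assms by (simp add: power_mono)
  qed simp
qed

text \<open>When the maximum does not grow
  the summand is accounted for exactly, when it grows to \<open>y\<^sub>k\<^sub>+\<^sub>1\<close> one uses \<open>2ab \<le> a\<^sup>2 + b\<^sup>2\<close>.\<close>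
lemma running_max_summation_by_parts:
  fixes y :: "nat \<Rightarrow> real"
  defines "m \<equiv> \<lambda>n. Max (y ` {0..n})"
  shows "(\<Sum>k<n. m k * (y (Suc k) - y k)) \<le> m n * y n - (m n)\<^sup>2 / 2"
proof (induction n)
  case 0
  then show ?case by (simp add: m_def power2_eq_square)
next
  case (Suc n)
  have m_Suc: "m (Suc n) = max (m n) (y (Suc n))"
    using running_max_Suc[of "\<lambda>j _. y j" n undefined] by (simp add: m_def running_max_def)
  show ?case
  proof (cases "y (Suc n) \<le> m n")
    case True
    then have "m (Suc n) = m n" using m_Suc by simp
    then show ?thesis using Suc.IH by (simp add: algebra_simps)
  next
    case False
    then have m_eq: "m (Suc n) = y (Suc n)" using m_Suc by simp
    have "m n * y (Suc n) \<le> (y (Suc n))\<^sup>2 / 2 + (m n)\<^sup>2 / 2"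
      using zero_le_power2[of "y (Suc n) - m n"] unfolding power2_diff by (simp add: mult.commute)
    then show ?thesis using Suc.IH m_eq by (simp add: algebra_simps power2_eq_square)
  qed
qed

text \<open>Taking expectations, the sums
  compare by the submartingale property and what remains is \<open>E m\<^sub>n\<^sup>2 \<le> 4 E y\<^sub>n\<^sup>2\<close>.\<close>
lemma pathwise_doob_L2:
  fixes y :: "nat \<Rightarrow> real"
  defines "m \<equiv> \<lambda>n. Max (y ` {0..n})"
  shows "(m n)\<^sup>2 + 4 * (\<Sum>k<n. m k * y (Suc k)) \<le> 4 * (y n)\<^sup>2 + 4 * (\<Sum>k<n. m k * y k)"
proof -
  have "m n * y n \<le> (m n)\<^sup>2 / 4 + (y n)\<^sup>2"
    using zero_le_power2[of "m n / 2 - y n"] unfolding power2_diff by (simp add: power_divide mult.commute)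
  moreover have "(\<Sum>k<n. m k * (y (Suc k) - y k)) = (\<Sum>k<n. m k * y (Suc k)) - (\<Sum>k<n. m k * y k)"
    by (simp add: algebra_simps sum_subtractf)
  ultimately show ?thesis using running_max_summation_by_parts[of y n] unfolding m_def by linarith
qed

text \<open>The cross terms \<open>m\<^sub>k Y\<^sub>k\<^sub>+\<^sub>1 \<le> m\<^sub>k\<^sub>+\<^sub>1\<^sup>2\<close> are integrable as soon as all \<open>Y\<^sub>j\<^sup>2\<close> are; this finiteness
  is what allows the cancellation in Doob's inequality below.\<close>
lemma nn_integral_running_max_cross_finite:
  fixes M :: "'a measure" and Y :: "nat \<Rightarrow> 'a \<Rightarrow> real"
  assumes nonneg: "\<And>j \<omega>. 0 \<le> Y j \<omega>"
    and meas: "\<And>j. j \<le> Suc k \<Longrightarrow> Y j \<in> borel_measurable M"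
    and finite_sq: "\<And>j. j \<le> Suc k \<Longrightarrow> (\<integral>\<^sup>+\<omega>. ennreal ((Y j \<omega>)\<^sup>2) \<partial>M) < \<infinity>"
  shows "(\<integral>\<^sup>+\<omega>. ennreal (running_max Y k \<omega> * Y (Suc k) \<omega>) \<partial>M) < \<infinity>"
proof -
  have pointwise: "ennreal (running_max Y k \<omega> * Y (Suc k) \<omega>) \<le> (\<Sum>j\<in>{0..Suc k}. ennreal ((Y j \<omega>)\<^sup>2))" for \<omega>
  proof -
    have "running_max Y k \<omega> \<le> running_max Y (Suc k) \<omega>" "Y (Suc k) \<omega> \<le> running_max Y (Suc k) \<omega>"
      using running_max_Suc[of Y k \<omega>] running_max_ge[of "Suc k" "Suc k" Y \<omega>] by auto
    then have "running_max Y k \<omega> * Y (Suc k) \<omega> \<le> (running_max Y (Suc k) \<omega>)\<^sup>2"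
      using running_max_nonneg[of Y \<omega>] nonneg unfolding power2_eq_square by (intro mult_mono) auto
    also have "\<dots> \<le> (\<Sum>j\<in>{0..Suc k}. (Y j \<omega>)\<^sup>2)" by (rule running_max_sq_le_sum) (rule nonneg)
    finally have "ennreal (running_max Y k \<omega> * Y (Suc k) \<omega>) \<le> ennreal (\<Sum>j\<in>{0..Suc k}. (Y j \<omega>)\<^sup>2)"
      by (rule ennreal_leI)
    also have "\<dots> = (\<Sum>j\<in>{0..Suc k}. ennreal ((Y j \<omega>)\<^sup>2))" by (rule sum_ennreal[symmetric]) simp
    finally show ?thesis .
  qed
  have "(\<integral>\<^sup>+\<omega>. ennreal (running_max Y k \<omega> * Y (Suc k) \<omega>) \<partial>M)
      \<le> (\<integral>\<^sup>+\<omega>. (\<Sum>j\<in>{0..Suc k}. ennreal ((Y j \<omega>)\<^sup>2)) \<partial>M)"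
    by (intro nn_integral_mono pointwise)
  also have "\<dots> = (\<Sum>j\<in>{0..Suc k}. \<integral>\<^sup>+\<omega>. ennreal ((Y j \<omega>)\<^sup>2) \<partial>M)"
  proof (rule nn_integral_sum)
    fix j assume "j \<in> {0..Suc k}"
    then have "Y j \<in> borel_measurable M" using meas by simp
    then show "(\<lambda>\<omega>. ennreal ((Y j \<omega>)\<^sup>2)) \<in> borel_measurable M" by measurable
  qed
  also have "\<dots> < \<infinity>" using finite_sq by (simp add: infinity_ennreal_def)
  finally show ?thesis .
qed

text \<open>Doob's \<open>L\<^sup>2\<close> maximal inequality for a nonnegative process, in the only form needed: the
  submartingale property is assumed just for the running maximum as weight.\<close>
lemma doob_L2_maximal:
  fixes M :: "'a measure" and Y :: "nat \<Rightarrow> 'a \<Rightarrow> real"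
  assumes nonneg: "\<And>j \<omega>. 0 \<le> Y j \<omega>"
    and meas: "\<And>j. j \<le> n \<Longrightarrow> Y j \<in> borel_measurable M"
    and finite_sq: "\<And>j. j \<le> n \<Longrightarrow> (\<integral>\<^sup>+\<omega>. ennreal ((Y j \<omega>)\<^sup>2) \<partial>M) < \<infinity>"
    and submart: "\<And>k. k < n \<Longrightarrow> (\<integral>\<^sup>+\<omega>. ennreal (running_max Y k \<omega> * Y k \<omega>) \<partial>M)
                                    \<le> (\<integral>\<^sup>+\<omega>. ennreal (running_max Y k \<omega> * Y (Suc k) \<omega>) \<partial>M)"
  shows "(\<integral>\<^sup>+\<omega>. ennreal ((running_max Y n \<omega>)\<^sup>2) \<partial>M) \<le> 4 * (\<integral>\<^sup>+\<omega>. ennreal ((Y n \<omega>)\<^sup>2) \<partial>M)"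
proof -
  let ?m = "running_max Y"
  have m_nonneg: "0 \<le> ?m k \<omega>" for k \<omega> using nonneg by (rule running_max_nonneg)
  have m_meas: "?m k \<in> borel_measurable M" if "k \<le> n" for k
    unfolding running_max_def[abs_def] using that meas by (intro borel_measurable_Max) auto
  define A where "A = (\<integral>\<^sup>+\<omega>. ennreal ((?m n \<omega>)\<^sup>2) \<partial>M)"
  define C where "C = (\<integral>\<^sup>+\<omega>. ennreal ((Y n \<omega>)\<^sup>2) \<partial>M)"
  define B where "B = (\<Sum>k<n. \<integral>\<^sup>+\<omega>. ennreal (?m k \<omega> * Y (Suc k) \<omega>) \<partial>M)"
  define B' where "B' = (\<Sum>k<n. \<integral>\<^sup>+\<omega>. ennreal (?m k \<omega> * Y k \<omega>) \<partial>M)"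
  have cross_meas: "(\<lambda>\<omega>. ennreal (?m k \<omega> * Y j \<omega>)) \<in> borel_measurable M" if "k \<le> n" "j \<le> n" for k j
    using m_meas[OF that(1)] meas[OF that(2)] by measurable
  have pointwise: "ennreal ((?m n \<omega>)\<^sup>2) + 4 * (\<Sum>k<n. ennreal (?m k \<omega> * Y (Suc k) \<omega>))
      \<le> 4 * ennreal ((Y n \<omega>)\<^sup>2) + 4 * (\<Sum>k<n. ennreal (?m k \<omega> * Y k \<omega>))" for \<omega>
  proof -
    have "(?m n \<omega>)\<^sup>2 + 4 * (\<Sum>k<n. ?m k \<omega> * Y (Suc k) \<omega>) \<le> 4 * (Y n \<omega>)\<^sup>2 + 4 * (\<Sum>k<n. ?m k \<omega> * Y k \<omega>)"
      using pathwise_doob_L2[of "\<lambda>j. Y j \<omega>" n] by (simp add: running_max_def)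
    then have "ennreal ((?m n \<omega>)\<^sup>2 + 4 * (\<Sum>k<n. ?m k \<omega> * Y (Suc k) \<omega>))
        \<le> ennreal (4 * (Y n \<omega>)\<^sup>2 + 4 * (\<Sum>k<n. ?m k \<omega> * Y k \<omega>))"
      by (rule ennreal_leI)
    moreover have "0 \<le> (\<Sum>k<n. ?m k \<omega> * Y (Suc k) \<omega>)" "0 \<le> (\<Sum>k<n. ?m k \<omega> * Y k \<omega>)"
      using m_nonneg nonneg by (simp_all add: sum_nonneg)
    ultimately show ?thesis using m_nonneg nonneg
      by (simp add: ennreal_plus ennreal_mult sum_ennreal[symmetric] sum_nonneg del: sum_ennreal)
  qed
  have sum_B: "(\<integral>\<^sup>+\<omega>. (\<Sum>k<n. ennreal (?m k \<omega> * Y (Suc k) \<omega>)) \<partial>M) = B"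
    unfolding B_def by (rule nn_integral_sum) (use cross_meas in auto)
  have sum_B': "(\<integral>\<^sup>+\<omega>. (\<Sum>k<n. ennreal (?m k \<omega> * Y k \<omega>)) \<partial>M) = B'"
    unfolding B'_def by (rule nn_integral_sum) (use cross_meas in auto)
  have sum_meas: "(\<lambda>\<omega>. (\<Sum>k<n. ennreal (?m k \<omega> * Y (Suc k) \<omega>))) \<in> borel_measurable M"
    "(\<lambda>\<omega>. (\<Sum>k<n. ennreal (?m k \<omega> * Y k \<omega>))) \<in> borel_measurable M"
    by (rule borel_measurable_sum; use cross_meas in auto)+
  have "A + 4 * B = (\<integral>\<^sup>+\<omega>. ennreal ((?m n \<omega>)\<^sup>2) + 4 * (\<Sum>k<n. ennreal (?m k \<omega> * Y (Suc k) \<omega>)) \<partial>M)"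
    using m_meas[of n] sum_meas by (simp add: A_def sum_B[symmetric] nn_integral_add nn_integral_cmult)
  also have "\<dots> \<le> (\<integral>\<^sup>+\<omega>. 4 * ennreal ((Y n \<omega>)\<^sup>2) + 4 * (\<Sum>k<n. ennreal (?m k \<omega> * Y k \<omega>)) \<partial>M)"
    by (intro nn_integral_mono pointwise)
  also have "\<dots> = 4 * C + 4 * B'"
    using meas[of n] sum_meas by (simp add: C_def sum_B'[symmetric] nn_integral_add nn_integral_cmult)
  also have "\<dots> \<le> 4 * C + 4 * B"
    unfolding B_def B'_def by (intro add_left_mono mult_left_mono sum_mono submart) auto
  finally have "4 * B + A \<le> 4 * B + 4 * C" by (simp add: add.commute)
  moreover have "4 * B \<noteq> \<infinity>"
  proof -
    have "(\<integral>\<^sup>+\<omega>. ennreal (?m k \<omega> * Y (Suc k) \<omega>) \<partial>M) < \<infinity>" if "k < n" for k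
      using that nonneg meas finite_sq by (intro nn_integral_running_max_cross_finite) auto
    then show ?thesis by (fastforce simp: B_def ennreal_mult_eq_top_iff infinity_ennreal_def)
  qed
  ultimately show ?thesis unfolding A_def C_def using ennreal_add_left_cancel_le by blast
qed


section \<open>Matrix-valued maps\<close>

lemma lipschitz_matrix_field_continuous:
  fixes \<sigma> :: "real^'d::finite \<Rightarrow> real^'m::finite^'d" and c :: real
  assumes c: "0 < c" and L: "\<And>x y. onorm (\<lambda>v. (\<sigma> x - \<sigma> y) *v v) \<le> c * norm (x - y)"
  shows "continuous_on UNIV \<sigma>"
proof -
  have column_cont: "continuous_on UNIV (\<lambda>y. \<sigma> y *v axis j 1)" for j
  proof -
    have "lipschitz_on c UNIV (\<lambda>y. \<sigma> y *v axis j 1)"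
    proof (rule lipschitz_onI)
      fix x y :: "real^'d"
      have "dist (\<sigma> x *v axis j 1) (\<sigma> y *v axis j 1) = norm ((\<sigma> x - \<sigma> y) *v axis j 1)"
        by (simp add: dist_norm matrix_vector_mult_diff_rdistrib)
      also have "\<dots> \<le> onorm (\<lambda>v. (\<sigma> x - \<sigma> y) *v v) * norm (axis j (1::real))"
        by (rule onorm) simp
      also have "\<dots> \<le> c * dist x y" using L[of x y] by (simp add: dist_norm)
      finally show "dist (\<sigma> x *v axis j 1) (\<sigma> y *v axis j 1) \<le> c * dist x y" .
    qed (use c in simp)
    then show ?thesis by (rule lipschitz_on_continuous_on)
  qed
  have columns: "\<sigma> = (\<lambda>y. \<chi> i j. (\<sigma> y *v axis j 1) $ i)"
    by (auto simp: fun_eq_iff vec_eq_iff matrix_vector_mult_def axis_def if_distrib cong: if_cong)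
  show ?thesis
    by (subst columns) (intro continuous_on_vec_lambda continuous_on_component column_cont)
qed

lemma matrix_vector_mult_continuous:
  "continuous_on UNIV (\<lambda>x. fst x *v (snd x :: real^'m::finite) :: real^'d::finite)"
  unfolding matrix_vector_mult_def
  by (intro continuous_on_vec_lambda continuous_on_sum continuous_on_mult continuous_on_component
      continuous_on_fst continuous_on_snd continuous_on_id)

lemma vector_matrix_mult_continuous:
  "continuous_on UNIV (\<lambda>x. (fst x :: real^'d::finite) v* (snd x :: real^'m::finite^'d))"
  unfolding vector_matrix_mult_def
  by (intro continuous_on_vec_lambda continuous_on_sum continuous_on_mult continuous_on_component
      continuous_on_fst continuous_on_snd continuous_on_id)

text \<open>The row vector \<open>y\<^sup>T A\<close> is bounded by \<open>|y| \<parallel>A\<parallel>\<close>: with \<open>u = y\<^sup>T A\<close> one has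
  \<open>|u|\<^sup>2 = \<langle>y, A u\<rangle> \<le> |y| \<parallel>A\<parallel> |u|\<close>.\<close>
lemma norm_vector_matrix_mult_le:
  fixes y :: "real^'d::finite" and A :: "real^'m::finite^'d"
  shows "norm (y v* A) \<le> norm y * onorm (\<lambda>v. A *v v)"
proof -
  let ?u = "y v* A"
  have "(norm ?u)\<^sup>2 = inner y (A *v ?u)" by (simp add: power2_norm_eq_inner dot_lmul_matrix)
  then have "norm ?u * norm ?u = inner y (A *v ?u)" by (simp add: power2_eq_square)
  also have "\<dots> \<le> norm y * norm (A *v ?u)" by (rule Cauchy_Schwarz_ineq2[THEN abs_le_D1])
  also have "\<dots> \<le> norm y * (onorm (\<lambda>v. A *v v) * norm ?u)"
    by (intro mult_left_mono onorm matrix_vector_mul_bounded_linear) simp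
  finally have "norm ?u * norm ?u \<le> (norm y * onorm (\<lambda>v. A *v v)) * norm ?u" by (simp add: mult_ac)
  then show ?thesis
    using onorm_pos_le[OF matrix_vector_mul_bounded_linear[of A]]
    by (cases "norm ?u = 0") auto
qed


section \<open>The tamed Euler scheme at a fixed step size\<close>

text \<open>The scheme with \<open>N > 0\<close> steps on \<open>[0, T]\<close>.  Of the drift only continuity matters here,
  of the diffusion coefficient only its Lipschitz bound.\<close>
locale tamed_euler_grid = prob_space M
  for M :: "'a measure" +
  fixes T c :: real and F :: "real \<Rightarrow> 'a measure"
    and W :: "real \<Rightarrow> 'a \<Rightarrow> real^'m::finite" and \<xi> :: "'a \<Rightarrow> real^'d::finite"
    and \<mu> :: "real^'d \<Rightarrow> real^'d" and \<sigma> :: "real^'d \<Rightarrow> real^'m^'d" and N :: nat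
  assumes T_pos: "0 < T"
    and filtration: "normal_filtration M T F"
    and brownian: "std_brownian_motion M T F W"
    and \<xi>_meas: "\<xi> \<in> borel_measurable (F 0)"
    and \<mu>_cont: "continuous_on UNIV \<mu>"
    and c_pos: "0 < c"
    and \<sigma>_lipschitz: "\<And>x y. onorm (\<lambda>v. (\<sigma> x - \<sigma> y) *v v) \<le> c * norm (x - y)"
    and N_pos: "0 < N"
begin

definition grid :: "nat \<Rightarrow> real" where "grid k = real k * T / real N"

definition Fg :: "nat \<Rightarrow> 'a measure" where "Fg k = F (grid k)"

definition Y :: "nat \<Rightarrow> 'a \<Rightarrow> real^'d" where "Y k = tamed_euler T N \<mu> \<sigma> W \<xi> k"

definition incr :: "nat \<Rightarrow> 'a \<Rightarrow> real^'m" where "incr k = dW T N W k"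

definition S :: "nat \<Rightarrow> 'a \<Rightarrow> real" where "S n \<omega> = (\<Sum>k<n. alpha T N \<mu> \<sigma> W \<xi> k \<omega>)"

text \<open>The integrand \<open>v\<^sub>k\<close> with \<open>\<alpha>\<^sub>k = \<langle>v\<^sub>k, \<Delta>W\<^sub>k\<rangle>\<close>, and its uniform bound \<open>K\<close>.\<close>
definition integrand :: "nat \<Rightarrow> 'a \<Rightarrow> real^'m" where
  "integrand k \<omega> =
     (let y = Y k \<omega> in if 1 \<le> norm y then (1 / (norm y)\<^sup>2) *\<^sub>R (y v* \<sigma> y) else 0)"

definition K :: real where "K = onorm (\<lambda>v. \<sigma> 0 *v v) + c"

lemma grid_nonneg: "0 \<le> grid k"
  unfolding grid_def using T_pos by simp

lemma grid_le_T: "k \<le> N \<Longrightarrow> grid k \<le> T"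
  unfolding grid_def using T_pos N_pos by (simp add: divide_le_eq mult_right_mono)

lemma grid_mono: "j \<le> k \<Longrightarrow> grid j \<le> grid k"
  unfolding grid_def using T_pos N_pos by (simp add: divide_right_mono mult_right_mono)

lemma grid_step: "grid (Suc k) - grid k = T / real N"
  unfolding grid_def by (simp add: add_divide_distrib distrib_right)

lemma grid_less_Suc: "grid k < grid (Suc k)"
  using grid_step[of k] T_pos N_pos by (simp add: algebra_simps)

lemma filtration_subalgebra: "t \<in> {0..T} \<Longrightarrow> space (F t) = space M \<and> sets (F t) \<subseteq> sets M"
  using conjunct1[OF filtration[unfolded normal_filtration_def]] by blast

lemma filtration_mono: "0 \<le> s \<Longrightarrow> s \<le> t \<Longrightarrow> t \<le> T \<Longrightarrow> sets (F s) \<subseteq> sets (F t)"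
  using conjunct1[OF conjunct2[OF filtration[unfolded normal_filtration_def]]] by blast

lemma Fg_subalgebra: "k \<le> N \<Longrightarrow> subalgebra M (Fg k)"
  using filtration_subalgebra[of "grid k"] grid_nonneg[of k] grid_le_T[of k]
  unfolding subalgebra_def Fg_def by simp

lemma measurable_Fg_mono:
  assumes "j \<le> k" "k \<le> N" "f \<in> measurable (Fg j) C"
  shows "f \<in> measurable (Fg k) C"
proof -
  have "sets (Fg j) \<subseteq> sets (Fg k)"
    using filtration_mono[OF grid_nonneg[of j] grid_mono[of j k] grid_le_T[of k]] assms(1,2)
    unfolding Fg_def by simp
  moreover have "space (Fg j) = space (Fg k)"
    using Fg_subalgebra[of j] Fg_subalgebra[of k] assms(1,2) by (simp add: subalgebra_def)
  ultimately show ?thesis using assms(3) by (auto simp: measurable_def)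
qed

lemma measurable_Fg_M: "k \<le> N \<Longrightarrow> f \<in> measurable (Fg k) C \<Longrightarrow> f \<in> measurable M C"
  using Fg_subalgebra[of k] by (auto simp: measurable_def subalgebra_def)

lemma W_grid_meas: "k \<le> N \<Longrightarrow> W (grid k) \<in> borel_measurable (Fg k)"
proof -
  have "\<forall>t\<in>{0..T}. W t \<in> borel_measurable (F t)"
    using brownian unfolding std_brownian_motion_def by (elim conjE)
  then show "k \<le> N \<Longrightarrow> ?thesis" using grid_nonneg[of k] grid_le_T[of k] unfolding Fg_def by simp
qed

lemma incr_eq: "incr k = (\<lambda>\<omega>. W (grid (Suc k)) \<omega> - W (grid k) \<omega>)"
  unfolding incr_def dW_def grid_def by (simp add: fun_eq_iff)

lemma incr_meas: "k < N \<Longrightarrow> incr k \<in> borel_measurable (Fg (Suc k))"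
proof -
  assume k: "k < N"
  have "W (grid k) \<in> borel_measurable (Fg (Suc k))"
    using k by (intro measurable_Fg_mono[OF _ _ W_grid_meas]) auto
  moreover have "W (grid (Suc k)) \<in> borel_measurable (Fg (Suc k))" using k W_grid_meas by simp
  ultimately show ?thesis unfolding incr_eq by measurable
qed

lemma incr_law:
  assumes k: "k < N"
  shows "distributed M lborel (incr k)
           (\<lambda>x. ennreal (\<Prod>i\<in>UNIV. normal_density 0 (sqrt (T / real N)) (x$i)))"
    and "\<forall>A\<in>sets (Fg k). \<forall>B\<in>sets borel.
           measure M (A \<inter> (incr k -` B \<inter> space M)) = measure M A * measure M (incr k -` B \<inter> space M)"
proof -
  have "\<forall>s t. 0 \<le> s \<longrightarrow> s < t \<longrightarrow> t \<le> T \<longrightarrow>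
        distributed M lborel (\<lambda>\<omega>. W t \<omega> - W s \<omega>)
          (\<lambda>x. ennreal (\<Prod>i\<in>UNIV. normal_density 0 (sqrt (t - s)) (x $ i))) \<and>
        (\<forall>A\<in>sets (F s). \<forall>B\<in>sets borel.
           measure M (A \<inter> ((\<lambda>\<omega>. W t \<omega> - W s \<omega>) -` B \<inter> space M)) =
           measure M A * measure M ((\<lambda>\<omega>. W t \<omega> - W s \<omega>) -` B \<inter> space M))"
    using brownian unfolding std_brownian_motion_def by (elim conjE)
  from this[rule_format, OF grid_nonneg[of k] grid_less_Suc[of k] grid_le_T[of "Suc k"]] k
  show "distributed M lborel (incr k)
           (\<lambda>x. ennreal (\<Prod>i\<in>UNIV. normal_density 0 (sqrt (T / real N)) (x$i)))"
    and "\<forall>A\<in>sets (Fg k). \<forall>B\<in>sets borel.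
           measure M (A \<inter> (incr k -` B \<inter> space M)) = measure M A * measure M (incr k -` B \<inter> space M)"
    unfolding incr_eq Fg_def grid_step by simp_all
qed

definition step :: "real^'d \<Rightarrow> real^'m \<Rightarrow> real^'d" where
  "step y d = y + ((T / real N) / (1 + (T / real N) * norm (\<mu> y))) *\<^sub>R \<mu> y + \<sigma> y *v d"

lemma \<sigma>_cont: "continuous_on UNIV \<sigma>"
  by (rule lipschitz_matrix_field_continuous[OF c_pos \<sigma>_lipschitz])

lemma step_cont: "continuous_on UNIV (\<lambda>x. step (fst x) (snd x))"
proof -
  have \<mu>_fst: "continuous_on UNIV (\<lambda>x::(real^'d) \<times> (real^'m). \<mu> (fst x))"
    by (rule continuous_on_compose2[OF \<mu>_cont continuous_on_fst[OF continuous_on_id]]) simp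
  have \<sigma>_fst: "continuous_on UNIV (\<lambda>x::(real^'d) \<times> (real^'m). \<sigma> (fst x))"
    by (rule continuous_on_compose2[OF \<sigma>_cont continuous_on_fst[OF continuous_on_id]]) simp
  have diffusion: "continuous_on UNIV (\<lambda>x::(real^'d) \<times> (real^'m). \<sigma> (fst x) *v snd x)"
    using continuous_on_compose2[OF matrix_vector_mult_continuous
            continuous_on_Pair[OF \<sigma>_fst continuous_on_snd[OF continuous_on_id]]]
    by simp
  have denominator_pos: "1 + (T / real N) * norm (\<mu> y) \<noteq> 0" for y
  proof -
    have "0 \<le> (T / real N) * norm (\<mu> y)" using T_pos by simp
    then show ?thesis by linarith
  qed
  show ?thesis unfolding step_def
    by (intro continuous_on_add continuous_on_scaleR continuous_on_divide continuous_on_mult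
        continuous_on_norm continuous_on_const continuous_on_fst continuous_on_id \<mu>_fst diffusion)
       (use denominator_pos in auto)
qed

lemma Y_Suc: "Y (Suc k) \<omega> = step (Y k \<omega>) (incr k \<omega>)"
  unfolding Y_def incr_def step_def by (simp add: Let_def)

lemma Y_meas: "k \<le> N \<Longrightarrow> Y k \<in> borel_measurable (Fg k)"
proof (induction k)
  case 0
  have "Y 0 = \<xi>" by (simp add: Y_def fun_eq_iff)
  then show ?case using \<xi>_meas by (simp add: Fg_def grid_def)
next
  case (Suc k)
  have "Y k \<in> borel_measurable (Fg (Suc k))"
    using Suc by (intro measurable_Fg_mono[of k _, OF _ _ Suc.IH]) auto
  moreover have "incr k \<in> borel_measurable (Fg (Suc k))" using Suc incr_meas by simp
  ultimately have "(\<lambda>\<omega>. step (Y k \<omega>) (incr k \<omega>)) \<in> borel_measurable (Fg (Suc k))"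
    by (rule borel_measurable_continuous_Pair[OF _ _ step_cont])
  then show ?case by (simp add: Y_Suc[abs_def])
qed

lemma alpha_eq_inner: "alpha T N \<mu> \<sigma> W \<xi> k \<omega> = inner (integrand k \<omega>) (incr k \<omega>)"
proof -
  let ?y = "Y k \<omega>" and ?d = "incr k \<omega>"
  have "inner (?y /\<^sub>R norm ?y) (((1 / norm ?y) *\<^sub>R \<sigma> ?y) *v ?d)
      = (1 / (norm ?y)^2) * inner ?y (\<sigma> ?y *v ?d)"
    by (simp add: scaleR_matrix_vector_assoc[symmetric] power2_eq_square divide_inverse)
  also have "\<dots> = inner ((1 / (norm ?y)^2) *\<^sub>R (?y v* \<sigma> ?y)) ?d"
    by (simp add: dot_lmul_matrix)
  finally show ?thesis
    unfolding alpha_def integrand_def Y_def[symmetric] incr_def[symmetric] by (simp add: Let_def)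
qed

lemma S_Suc: "S (Suc n) \<omega> = S n \<omega> + inner (integrand n \<omega>) (incr n \<omega>)"
  unfolding S_def by (simp add: alpha_eq_inner)

lemma K_nonneg: "0 \<le> K"
  unfolding K_def using c_pos onorm_pos_le[OF matrix_vector_mul_bounded_linear[of "\<sigma> 0"]] by linarith

lemma \<sigma>_onorm_growth: "onorm (\<lambda>v. \<sigma> y *v v) \<le> onorm (\<lambda>v. \<sigma> 0 *v v) + c * norm y"
proof -
  have "(\<lambda>v. \<sigma> y *v v) = (\<lambda>v. \<sigma> 0 *v v + (\<sigma> y - \<sigma> 0) *v v)"
    by (rule ext) (simp add: matrix_vector_mult_diff_rdistrib)
  then have "onorm (\<lambda>v. \<sigma> y *v v) = onorm (\<lambda>v. \<sigma> 0 *v v + (\<sigma> y - \<sigma> 0) *v v)"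
    by (rule arg_cong)
  also have "\<dots> \<le> onorm (\<lambda>v. \<sigma> 0 *v v) + onorm (\<lambda>v. (\<sigma> y - \<sigma> 0) *v v)"
    by (intro onorm_triangle matrix_vector_mul_bounded_linear)
  finally show ?thesis using \<sigma>_lipschitz[of y 0] by simp
qed

text \<open>The integrand is bounded by \<open>K\<close>, because it vanishes inside the unit ball and outside is
  at most \<open>\<parallel>\<sigma>(y)\<parallel> / |y| \<le> \<parallel>\<sigma>(0)\<parallel> / |y| + c\<close>.\<close>
lemma integrand_bound: "norm (integrand k \<omega>) \<le> K"
proof (cases "1 \<le> norm (Y k \<omega>)")
  case False
  then show ?thesis using K_nonneg by (simp add: integrand_def Let_def)
next
  case True
  let ?y = "Y k \<omega>" and ?o = "onorm (\<lambda>v. \<sigma> 0 *v v)"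
  have o_nonneg: "0 \<le> ?o" by (rule onorm_pos_le[OF matrix_vector_mul_bounded_linear])
  have y_pos: "0 < norm ?y" using True by linarith
  have "norm (integrand k \<omega>) = norm (?y v* \<sigma> ?y) / (norm ?y)\<^sup>2"
    using True by (simp add: integrand_def Let_def)
  also have "\<dots> \<le> norm ?y * (?o + c * norm ?y) / (norm ?y)\<^sup>2"
  proof (rule divide_right_mono)
    show "norm (?y v* \<sigma> ?y) \<le> norm ?y * (?o + c * norm ?y)"
      using norm_vector_matrix_mult_le[of ?y "\<sigma> ?y"] mult_left_mono[OF \<sigma>_onorm_growth[of ?y]]
      by (meson norm_ge_zero order_trans)
  qed simp
  also have "\<dots> = ?o / norm ?y + c" using y_pos by (simp add: field_simps power2_eq_square)
  also have "\<dots> \<le> ?o + c"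
  proof -
    have "?o \<le> ?o * norm ?y" using True o_nonneg by (simp add: mult_le_cancel_left1)
    then show ?thesis using y_pos by (simp add: divide_le_eq)
  qed
  finally show ?thesis unfolding K_def .
qed

lemma integrand_meas: "k \<le> N \<Longrightarrow> integrand k \<in> borel_measurable (Fg k)"
proof -
  assume k: "k \<le> N"
  note Y_k = Y_meas[OF k]
  have "(\<lambda>\<omega>. \<sigma> (Y k \<omega>)) \<in> borel_measurable (Fg k)"
    using measurable_compose[OF Y_k borel_measurable_continuous_onI[OF \<sigma>_cont]] by (simp add: comp_def)
  then have "(\<lambda>\<omega>. Y k \<omega> v* \<sigma> (Y k \<omega>)) \<in> borel_measurable (Fg k)"
    by (rule borel_measurable_continuous_Pair[OF Y_k _ vector_matrix_mult_continuous])
  moreover have "(\<lambda>\<omega>. norm (Y k \<omega>)) \<in> borel_measurable (Fg k)" using Y_k by measurable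
  ultimately show ?thesis unfolding integrand_def[abs_def] Let_def by measurable
qed

lemma S_meas: "n \<le> N \<Longrightarrow> S n \<in> borel_measurable (Fg n)"
proof -
  assume n: "n \<le> N"
  have "(\<lambda>\<omega>. inner (integrand k \<omega>) (incr k \<omega>)) \<in> borel_measurable (Fg n)" if k: "k < n" for k
  proof -
    have "integrand k \<in> borel_measurable (Fg n)"
      using k n by (intro measurable_Fg_mono[OF _ _ integrand_meas]) auto
    moreover have "incr k \<in> borel_measurable (Fg n)"
      using k n by (intro measurable_Fg_mono[OF _ _ incr_meas]) auto
    ultimately show ?thesis by measurable
  qed
  then show ?thesis unfolding S_def[abs_def] alpha_eq_inner by (intro borel_measurable_sum) auto
qed

lemma nn_integral_exp_incr:
  assumes k: "k < N" and G: "G \<in> borel_measurable (Fg k)" and w: "w \<in> borel_measurable (Fg k)"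
  shows "(\<integral>\<^sup>+\<omega>. G \<omega> * ennreal (exp (inner (w \<omega>) (incr k \<omega>))) \<partial>M)
       = (\<integral>\<^sup>+\<omega>. G \<omega> * ennreal (exp ((norm (w \<omega>))\<^sup>2 * (T / real N) / 2)) \<partial>M)"
proof -
  have sd: "0 < sqrt (T / real N)" "(sqrt (T / real N))\<^sup>2 = T / real N" using T_pos N_pos by simp_all
  have "subalgebra M (Fg k)" using k by (intro Fg_subalgebra) simp
  from nn_integral_exp_indep_normal[OF prob_space_axioms this incr_law(1)[OF k] sd(1) incr_law(2)[OF k] G w]
  show ?thesis by (simp add: sd(2))
qed

text \<open>Exponential moments of \<open>S\<^sub>n\<close>: each step contributes at most a factor \<open>exp (a\<^sup>2 K\<^sup>2 h / 2)\<close>.\<close>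
lemma exp_moment_S:
  assumes "n \<le> N"
  shows "(\<integral>\<^sup>+\<omega>. ennreal (exp (a * S n \<omega>)) \<partial>M) \<le> ennreal (exp (a\<^sup>2 * K\<^sup>2 * (T / real N) / 2 * real n))"
  using assms
proof (induction n)
  case 0
  then show ?case by (simp add: S_def emeasure_space_1)
next
  case (Suc n)
  have n: "n < N" using Suc by simp
  let ?h = "T / real N"
  have G: "(\<lambda>\<omega>. ennreal (exp (a * S n \<omega>))) \<in> borel_measurable (Fg n)"
    using S_meas[OF less_imp_le[OF n]] by measurable
  have w: "(\<lambda>\<omega>. a *\<^sub>R integrand n \<omega>) \<in> borel_measurable (Fg n)"
    using integrand_meas[OF less_imp_le[OF n]] by measurable
  have cell_factor: "exp ((norm (a *\<^sub>R integrand n \<omega>))\<^sup>2 * ?h / 2) \<le> exp (a\<^sup>2 * K\<^sup>2 * ?h / 2)" for \<omega>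
  proof -
    have "(norm (a *\<^sub>R integrand n \<omega>))\<^sup>2 \<le> a\<^sup>2 * K\<^sup>2"
      using integrand_bound[of n \<omega>] by (simp add: power_mult_distrib mult_left_mono power_mono)
    then show ?thesis using T_pos by (simp add: divide_right_mono mult_right_mono)
  qed
  have "(\<integral>\<^sup>+\<omega>. ennreal (exp (a * S (Suc n) \<omega>)) \<partial>M)
      = (\<integral>\<^sup>+\<omega>. ennreal (exp (a * S n \<omega>)) * ennreal (exp (inner (a *\<^sub>R integrand n \<omega>) (incr n \<omega>))) \<partial>M)"
    by (simp add: S_Suc distrib_left exp_add ennreal_mult')
  also have "\<dots> = (\<integral>\<^sup>+\<omega>. ennreal (exp (a * S n \<omega>)) * ennreal (exp ((norm (a *\<^sub>R integrand n \<omega>))\<^sup>2 * ?h / 2)) \<partial>M)"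
    by (rule nn_integral_exp_incr[OF n G w])
  also have "\<dots> \<le> (\<integral>\<^sup>+\<omega>. ennreal (exp (a * S n \<omega>)) * ennreal (exp (a\<^sup>2 * K\<^sup>2 * ?h / 2)) \<partial>M)"
    by (intro nn_integral_mono mult_left_mono ennreal_leI cell_factor) simp
  also have "\<dots> = (\<integral>\<^sup>+\<omega>. ennreal (exp (a * S n \<omega>)) \<partial>M) * ennreal (exp (a\<^sup>2 * K\<^sup>2 * ?h / 2))"
    using measurable_Fg_M[OF _ S_meas[OF less_imp_le[OF n]]] n by (intro nn_integral_multc) auto
  also have "\<dots> \<le> ennreal (exp (a\<^sup>2 * K\<^sup>2 * ?h / 2 * real n)) * ennreal (exp (a\<^sup>2 * K\<^sup>2 * ?h / 2))"
    using Suc n by (intro mult_right_mono) auto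
  also have "\<dots> = ennreal (exp (a\<^sup>2 * K\<^sup>2 * ?h / 2 * real (Suc n)))"
    by (simp add: ennreal_mult'[symmetric] exp_add[symmetric] algebra_simps add_divide_distrib)
  finally show ?case .
qed

lemma exp_moment_S_uniform:
  assumes "n \<le> N"
  shows "(\<integral>\<^sup>+\<omega>. ennreal (exp (a * S n \<omega>)) \<partial>M) \<le> ennreal (exp (a\<^sup>2 * K\<^sup>2 * T / 2))"
proof -
  have "(T / real N) * real n \<le> T"
    using assms T_pos N_pos by (simp add: divide_le_eq mult_left_mono)
  then have "(a\<^sup>2 * K\<^sup>2 / 2) * ((T / real N) * real n) \<le> (a\<^sup>2 * K\<^sup>2 / 2) * T"
    by (intro mult_left_mono) auto
  then have "ennreal (exp (a\<^sup>2 * K\<^sup>2 * (T / real N) / 2 * real n)) \<le> ennreal (exp (a\<^sup>2 * K\<^sup>2 * T / 2))"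
    by (intro ennreal_leI) (simp add: algebra_simps)
  then show ?thesis using exp_moment_S[OF assms, of a] by (rule_tac order_trans) auto
qed

text \<open>Submartingale property of \<open>exp (a S\<^sub>n)\<close> against \<open>F\<^sub>t\<^sub>n\<close>-measurable weights: integrating
  out the next increment multiplies by \<open>exp (|a v\<^sub>n|\<^sup>2 h / 2) \<ge> 1\<close>.\<close>
lemma exp_S_submartingale:
  assumes n: "n < N" and g: "g \<in> borel_measurable (Fg n)"
  shows "(\<integral>\<^sup>+\<omega>. g \<omega> * ennreal (exp (a * S n \<omega>)) \<partial>M) \<le> (\<integral>\<^sup>+\<omega>. g \<omega> * ennreal (exp (a * S (Suc n) \<omega>)) \<partial>M)"
proof -
  let ?h = "T / real N"
  have G: "(\<lambda>\<omega>. g \<omega> * ennreal (exp (a * S n \<omega>))) \<in> borel_measurable (Fg n)"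
    using S_meas[OF less_imp_le[OF n]] g by measurable
  have w: "(\<lambda>\<omega>. a *\<^sub>R integrand n \<omega>) \<in> borel_measurable (Fg n)"
    using integrand_meas[OF less_imp_le[OF n]] by measurable
  have "(\<integral>\<^sup>+\<omega>. g \<omega> * ennreal (exp (a * S n \<omega>)) \<partial>M)
     \<le> (\<integral>\<^sup>+\<omega>. g \<omega> * ennreal (exp (a * S n \<omega>)) * ennreal (exp ((norm (a *\<^sub>R integrand n \<omega>))\<^sup>2 * ?h / 2)) \<partial>M)"
  proof (rule nn_integral_mono)
    fix \<omega>
    have "1 \<le> ennreal (exp ((norm (a *\<^sub>R integrand n \<omega>))\<^sup>2 * ?h / 2))"
      using T_pos by (simp add: ennreal_leI)
    then show "g \<omega> * ennreal (exp (a * S n \<omega>))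
        \<le> g \<omega> * ennreal (exp (a * S n \<omega>)) * ennreal (exp ((norm (a *\<^sub>R integrand n \<omega>))\<^sup>2 * ?h / 2))"
      using mult_left_mono[of 1 _ "g \<omega> * ennreal (exp (a * S n \<omega>))"] by simp
  qed
  also have "\<dots> = (\<integral>\<^sup>+\<omega>. g \<omega> * ennreal (exp (a * S n \<omega>)) * ennreal (exp (inner (a *\<^sub>R integrand n \<omega>) (incr n \<omega>))) \<partial>M)"
    by (rule nn_integral_exp_incr[OF n G w, symmetric])
  also have "\<dots> = (\<integral>\<^sup>+\<omega>. g \<omega> * ennreal (exp (a * S (Suc n) \<omega>)) \<partial>M)"
    by (simp add: S_Suc distrib_left exp_add ennreal_mult' mult.assoc)
  finally show ?thesis .
qed

text \<open>Doob's inequality for \<open>exp (a S\<^sub>n / 2)\<close>, whose square is \<open>exp (a S\<^sub>n)\<close>, bounds the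
  maximal exponential moment by four times the uniform moment bound.\<close>
lemma max_exp_moment_S:
  "(\<integral>\<^sup>+\<omega>. ennreal (Max ((\<lambda>n. exp (a * (\<Sum>k<n. alpha T N \<mu> \<sigma> W \<xi> k \<omega>))) ` {0..N})) \<partial>M)
    \<le> ennreal (4 * exp (a\<^sup>2 * K\<^sup>2 * T / 2))"
proof -
  define E where "E j \<omega> = exp (a / 2 * S j \<omega>)" for j \<omega>
  have E_nonneg: "0 \<le> E j \<omega>" for j \<omega> unfolding E_def by simp
  have E_sq: "(E j \<omega>)\<^sup>2 = exp (a * S j \<omega>)" for j \<omega>
    unfolding E_def by (simp add: power2_eq_square exp_add[symmetric])
  have E_meas: "E j \<in> borel_measurable (Fg k)" if "j \<le> k" "k \<le> N" for j k
  proof -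
    have "S j \<in> borel_measurable (Fg j)" using that by (intro S_meas) simp
    then have "E j \<in> borel_measurable (Fg j)" unfolding E_def[abs_def] by measurable
    then show ?thesis using that by (rule_tac measurable_Fg_mono[of j k]) auto
  qed
  have "Max ((\<lambda>n. exp (a * (\<Sum>k<n. alpha T N \<mu> \<sigma> W \<xi> k \<omega>))) ` {0..N}) = (running_max E N \<omega>)\<^sup>2"
    for \<omega> unfolding running_max_sq_eq_Max_sq[of E, OF E_nonneg] by (simp add: E_sq S_def)
  then have "(\<integral>\<^sup>+\<omega>. ennreal (Max ((\<lambda>n. exp (a * (\<Sum>k<n. alpha T N \<mu> \<sigma> W \<xi> k \<omega>))) ` {0..N})) \<partial>M)
      = (\<integral>\<^sup>+\<omega>. ennreal ((running_max E N \<omega>)\<^sup>2) \<partial>M)" by simp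
  also have "\<dots> \<le> 4 * (\<integral>\<^sup>+\<omega>. ennreal ((E N \<omega>)\<^sup>2) \<partial>M)"
  proof (rule doob_L2_maximal)
    show "0 \<le> E j \<omega>" for j \<omega> by (rule E_nonneg)
    show E_M: "E j \<in> borel_measurable M" if "j \<le> N" for j
      using that by (intro measurable_Fg_M[OF _ E_meas]) auto
    show "(\<integral>\<^sup>+\<omega>. ennreal ((E j \<omega>)\<^sup>2) \<partial>M) < \<infinity>" if "j \<le> N" for j
      using exp_moment_S_uniform[OF that, of a] by (simp add: E_sq le_less_trans)
    show "(\<integral>\<^sup>+\<omega>. ennreal (running_max E k \<omega> * E k \<omega>) \<partial>M)
        \<le> (\<integral>\<^sup>+\<omega>. ennreal (running_max E k \<omega> * E (Suc k) \<omega>) \<partial>M)" if k: "k < N" for k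
    proof -
      have "running_max E k \<in> borel_measurable (Fg k)"
        unfolding running_max_def[abs_def] using k E_meas by (intro borel_measurable_Max) auto
      then have "(\<lambda>\<omega>. ennreal (running_max E k \<omega>)) \<in> borel_measurable (Fg k)" by measurable
      from exp_S_submartingale[OF k this, of "a / 2"] show ?thesis
        using running_max_nonneg[of E] by (simp add: E_def ennreal_mult)
    qed
  qed
  also have "\<dots> \<le> 4 * ennreal (exp (a\<^sup>2 * K\<^sup>2 * T / 2))"
    unfolding E_sq by (intro mult_left_mono exp_moment_S_uniform) auto
  finally show ?thesis by (simp add: ennreal_mult)
qed

end


theorem lemma3p4:
  fixes M :: "'a measure" and T c :: real and F :: "real \<Rightarrow> 'a measure"
    and W :: "real \<Rightarrow> 'a \<Rightarrow> real^'m::finite" and \<xi> :: "'a \<Rightarrow> real^'d::finite"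
    and \<mu> :: "real^'d \<Rightarrow> real^'d" and \<mu>' :: "real^'d \<Rightarrow> ((real^'d) \<Rightarrow>\<^sub>L (real^'d))"
    and \<sigma> :: "real^'d \<Rightarrow> real^'m^'d" and p :: real
  assumes "prob_space M" and "0 < T"
    and "normal_filtration M T F"
    and "std_brownian_motion M T F W"
    and "\<xi> \<in> borel_measurable (F 0)"
    and "\<And>q::nat. integrable M (\<lambda>\<omega>. norm (\<xi> \<omega>) ^ q)"
    and "\<And>x. (\<mu> has_derivative blinfun_apply (\<mu>' x)) (at x)"
    and "continuous_on UNIV \<mu>'"
    and "0 < c"
    and "\<And>x. norm (\<mu>' x) \<le> c * (1 + norm x powr c)"
    and "\<And>x y. onorm (\<lambda>v. (\<sigma> x - \<sigma> y) *v v) \<le> c * norm (x - y)"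
    and "\<And>x y. inner (x - y) (\<mu> x - \<mu> y) \<le> c * (norm (x - y))\<^sup>2"
    and "1 \<le> p"
  shows "(SUP z\<in>{-1, 1::real}. SUP N::nat.
           \<integral>\<^sup>+ \<omega>. ennreal (Max ((\<lambda>n. exp (p * z * (\<Sum>k<n. alpha T N \<mu> \<sigma> W \<xi> k \<omega>))) ` {0..N})) \<partial>M)
         < \<infinity>"
proof -
  interpret prob_space M by fact
  define B where "B = 4 * exp (p\<^sup>2 * (onorm (\<lambda>v. \<sigma> 0 *v v) + c)\<^sup>2 * T / 2)"
  have \<mu>_cont: "continuous_on UNIV \<mu>"
    using assms(7) by (intro continuous_at_imp_continuous_on ballI has_derivative_continuous) auto
  have bound: "(\<integral>\<^sup>+ \<omega>. ennreal (Max ((\<lambda>n. exp (p * z * (\<Sum>k<n. alpha T N \<mu> \<sigma> W \<xi> k \<omega>))) ` {0..N})) \<partial>M)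
      \<le> ennreal B" if z: "z \<in> {-1, 1}" for z N
  proof (cases "N = 0")
    case True
    have "0 \<le> p\<^sup>2 * (onorm (\<lambda>v. \<sigma> 0 *v v) + c)\<^sup>2 * T / 2" using \<open>0 < T\<close> by simp
    then have "1 \<le> exp (p\<^sup>2 * (onorm (\<lambda>v. \<sigma> 0 *v v) + c)\<^sup>2 * T / 2)" by simp
    then have "1 \<le> B" unfolding B_def by linarith
    then show ?thesis using True by (simp add: emeasure_space_1 ennreal_leI)
  next
    case False
    interpret tamed_euler_grid M T c F W \<xi> \<mu> \<sigma> N
      using assms \<mu>_cont False by unfold_locales auto
    have "(p * z)\<^sup>2 = p\<^sup>2" using z by auto
    then show ?thesis using max_exp_moment_S[of "p * z"] by (simp add: B_def K_def)
  qed
  have "(SUP z\<in>{-1, 1::real}. SUP N::nat.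
           \<integral>\<^sup>+ \<omega>. ennreal (Max ((\<lambda>n. exp (p * z * (\<Sum>k<n. alpha T N \<mu> \<sigma> W \<xi> k \<omega>))) ` {0..N})) \<partial>M)
        \<le> ennreal B"
    by (intro SUP_least bound)
  then show ?thesis by (rule order.strict_trans1) simp
qed

end
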